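(* Let $n\ge2$ and let $\sigma$ be a $*$-representation of $\mathcal{E}_n$ on $\mathcal{H}$ with generators $S_i=\sigma(\mathfrak{s}_i)$. Then $S=(S_1,\dots,S_n)$ has a wandering vector if and only if there exists $X\in\mathcal{X}(\sigma)$ which is bounded below.
   Context: $\mathcal{E}_n$ is the universal C*-algebra generated by isometries $\mathfrak{s}_1,\dots,\mathfrak{s}_n$ with pairwise orthogonal ranges. A vector $\eta\in\mathcal{H}$ is wandering if $\{S_w\eta:w\in\mathbb{F}_n^+\}$ is orthonormal, where $\mathbb{F}_n^+$ is the free semigroup on $n$ letters and $S_w=S_{i_1}\cdots S_{i_k}$ for $w=i_1\cdots i_k$. $L_i$ are the left creation operators $L_i\xi_w=\xi_{iw}$ on the Fock space $\ell^2(\mathbb{F}_n^+)$. $\mathcal{X}(\sigma)$ is the set of bounded $X:\ell^2(\mathbb{F}_n^+)\to\mathcal{H}$ with $S_iX=XL_i$ for $1\le i\le n$. *)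

theory Defs
  imports "HOL-Analysis.Analysis"
begin

class complex_vector = real_vector +
  fixes scaleC :: "complex \<Rightarrow> 'a \<Rightarrow> 'a"
  assumes scaleC_add_right: "scaleC a (x + y) = scaleC a x + scaleC a y"
    and scaleC_add_left: "scaleC (a + b) x = scaleC a x + scaleC b x"
    and scaleC_scaleC: "scaleC a (scaleC b x) = scaleC (a * b) x"
    and scaleC_one: "scaleC 1 x = x"
    and scaleR_scaleC: "scaleR r x = scaleC (complex_of_real r) x"

class complex_normed_vector = complex_vector + real_normed_vector +
  assumes norm_scaleC: "norm (scaleC a x) = cmod a * norm x"

class complex_inner = complex_normed_vector +
  fixes cinner :: "'a \<Rightarrow> 'a \<Rightarrow> complex"
  assumes cinner_commute: "cinner x y = cnj (cinner y x)"
    and cinner_add_left: "cinner (x + y) z = cinner x z + cinner y z"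
    and cinner_scaleC_left: "cinner (scaleC r x) y = cnj r * cinner x y"
    and cinner_Re_nonneg: "0 \<le> Re (cinner x x)"
    and cinner_eq_zero_iff: "cinner x x = 0 \<longleftrightarrow> x = 0"
    and norm_eq_sqrt_cinner: "norm x = sqrt (Re (cinner x x))"

class chilbert_space = complex_inner + complete_space

definition clinear_op :: "('a::complex_vector \<Rightarrow> 'b::complex_vector) \<Rightarrow> bool" where
  "clinear_op T \<longleftrightarrow> (\<forall>x y. T (x + y) = T x + T y) \<and> (\<forall>c x. T (scaleC c x) = scaleC c (T x))"

definition isometry :: "('a::complex_inner \<Rightarrow> 'a) \<Rightarrow> bool" where
  "isometry T \<longleftrightarrow> clinear_op T \<and> (\<forall>x. norm (T x) = norm x)"

text \<open>A *-representation sigma of E_n on H is the same as an n-tuple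
  S_0,...,S_(n-1) (S_i = sigma(s_i)) of isometries on H with pairwise orthogonal ranges
  (universal property of E_n). Generators are indexed 0..n-1.\<close>
definition En_rep :: "nat \<Rightarrow> (nat \<Rightarrow> 'a::complex_inner \<Rightarrow> 'a) \<Rightarrow> bool" where
  "En_rep n S \<longleftrightarrow> (\<forall>i<n. isometry (S i)) \<and>
     (\<forall>i<n. \<forall>j<n. i \<noteq> j \<longrightarrow> (\<forall>x y. cinner (S i x) (S j y) = 0))"

text \<open>Free semigroup F_n^+ on n letters: finite words (lists) over {0..<n}.\<close>
definition words :: "nat \<Rightarrow> nat list set" where
  "words n = {w. set w \<subseteq> {..<n}}"

definition S_word :: "(nat \<Rightarrow> 'a \<Rightarrow> 'a) \<Rightarrow> nat list \<Rightarrow> 'a \<Rightarrow> 'a" where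
  "S_word S w = foldr (\<lambda>i T. S i \<circ> T) w id"

definition wandering :: "nat \<Rightarrow> (nat \<Rightarrow> 'a::complex_inner \<Rightarrow> 'a) \<Rightarrow> 'a \<Rightarrow> bool" where
  "wandering n S \<eta> \<longleftrightarrow>
     (\<forall>v\<in>words n. \<forall>w\<in>words n.
        cinner (S_word S v \<eta>) (S_word S w \<eta>) = (if v = w then 1 else 0))"

definition fock :: "nat \<Rightarrow> (nat list \<Rightarrow> complex) set" where
  "fock n = {f. (\<forall>w. w \<notin> words n \<longrightarrow> f w = 0) \<and>
                 (\<lambda>w. (cmod (f w))\<^sup>2) summable_on UNIV}"

definition fock_norm :: "(nat list \<Rightarrow> complex) \<Rightarrow> real" where
  "fock_norm f = sqrt (\<Sum>\<^sub>\<infinity>w. (cmod (f w))\<^sup>2)"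

text \<open>L_i xi_w = xi_(iw).\<close>
definition Lcre :: "nat \<Rightarrow> (nat list \<Rightarrow> complex) \<Rightarrow> nat list \<Rightarrow> complex" where
  "Lcre i f w = (case w of [] \<Rightarrow> 0 | j # v \<Rightarrow> if j = i then f v else 0)"

definition bounded_fock_map :: "nat \<Rightarrow> ((nat list \<Rightarrow> complex) \<Rightarrow> 'a::complex_normed_vector) \<Rightarrow> bool" where
  "bounded_fock_map n X \<longleftrightarrow>
     (\<forall>f\<in>fock n. \<forall>g\<in>fock n. X (\<lambda>w. f w + g w) = X f + X g) \<and>
     (\<forall>c. \<forall>f\<in>fock n. X (\<lambda>w. c * f w) = scaleC c (X f)) \<and>
     (\<exists>K. \<forall>f\<in>fock n. norm (X f) \<le> K * fock_norm f)"

definition intertwiners :: "nat \<Rightarrow> (nat \<Rightarrow> 'a::complex_normed_vector \<Rightarrow> 'a)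
      \<Rightarrow> ((nat list \<Rightarrow> complex) \<Rightarrow> 'a) set" where
  "intertwiners n S = {X. bounded_fock_map n X \<and>
     (\<forall>i<n. \<forall>f\<in>fock n. S i (X f) = X (Lcre i f))}"

definition bounded_below_fock :: "nat \<Rightarrow> ((nat list \<Rightarrow> complex) \<Rightarrow> 'a::real_normed_vector) \<Rightarrow> bool" where
  "bounded_below_fock n X \<longleftrightarrow> (\<exists>c>0. \<forall>f\<in>fock n. c * fock_norm f \<le> norm (X f))"

end

theory Submission
  imports Defs
begin

text \<open>If \<open>\<eta>\<close> is wandering, the vectors \<open>S\<^sub>w \<eta>\<close> form an orthonormal family, so
  \<open>\<xi>\<^sub>w \<mapsto> S\<^sub>w \<eta>\<close> extends to an isometry \<open>X\<^sub>\<eta>\<close> of the Fock space, and \<open>S\<^sub>i X\<^sub>\<eta> = X\<^sub>\<eta> L\<^sub>i\<close>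
  because \<open>L\<^sub>i \<xi>\<^sub>w = \<xi>\<^sub>i\<^sub>w\<close>.

  Conversely, let \<open>X\<close> be an intertwiner bounded below by \<open>c > 0\<close> and let \<open>N\<close> be the image under
  \<open>X\<close> of the vectors vanishing at the empty word. Then \<open>N\<close> is a subspace invariant under every
  \<open>S\<^sub>i\<close> and containing \<open>S\<^sub>i X \<xi>\<^sub>\<emptyset> = X \<xi>\<^sub>i\<close>, while \<open>X \<xi>\<^sub>\<emptyset>\<close> has distance at least \<open>c\<close> from
  \<open>N\<close>. The normalised component \<open>\<eta>\<close> of \<open>X \<xi>\<^sub>\<emptyset>\<close> orthogonal to the closure of \<open>N\<close> is therefore
  a unit vector with \<open>S\<^sub>w \<eta> \<in> closure N \<perp> \<eta>\<close> for every nonempty word \<open>w\<close>; since the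
  \<open>S\<^sub>i\<close> are isometries with orthogonal ranges, \<open>\<eta>\<close> is wandering.\<close>

section \<open>Complex inner product spaces and isometries\<close>

lemma scaleC_zero_left [simp]: "scaleC 0 x = (0::'a::complex_vector)"
  using scaleC_add_left[of 0 0 x] by simp

lemma scaleC_minus1_left: "scaleC (- 1) x = - (x::'a::complex_vector)"
  using scaleR_scaleC[of "- 1" x] by simp

lemma cinner_zero_left [simp]: "cinner 0 y = 0"
  using cinner_add_left[of 0 0 y] by simp

lemma cinner_zero_right [simp]: "cinner x 0 = 0"
  using cinner_commute[of x 0] by simp

lemma cinner_add_right: "cinner x (y + z) = cinner x y + cinner x z"
  using cinner_commute[of x "y + z"] cinner_add_left[of y z x]
    cinner_commute[of y x] cinner_commute[of z x] by simp

lemma cinner_scaleC_right: "cinner x (scaleC r y) = r * cinner x y"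
  using cinner_commute[of x "scaleC r y"] cinner_scaleC_left[of r y x]
    cinner_commute[of y x] by simp

lemma cinner_minus_right: "cinner x (- y) = - cinner x y"
  using cinner_scaleC_right[of x "- 1" y] by (simp add: scaleC_minus1_left)

lemma cinner_sum_right: "cinner x (sum g F) = (\<Sum>i\<in>F. cinner x (g i))"
  by (induction F rule: infinite_finite_induct) (auto simp: cinner_add_right)

lemma cinner_self: "cinner x x = complex_of_real ((norm x)\<^sup>2)"
proof -
  have "Im (cinner x x) = 0"
    using cinner_commute[of x x] by (metis cnj.sel(2) complex_cnj_cancel_iff neg_equal_zero)
  moreover have "Re (cinner x x) = (norm x)\<^sup>2"
    using norm_eq_sqrt_cinner[of x] cinner_Re_nonneg[of x] by simp
  ultimately show ?thesis
    by (simp add: complex_eq_iff)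
qed

lemma power2_norm_add:
  "(norm (x + y))\<^sup>2 = (norm x)\<^sup>2 + (norm y)\<^sup>2 + 2 * Re (cinner x y)"
proof -
  have "cinner (x + y) (x + y) = cinner x x + cinner x y + cinner y x + cinner y y"
    by (simp add: cinner_add_left cinner_add_right)
  then have "(norm (x + y))\<^sup>2 = Re (cinner x x + cinner x y + cinner y x + cinner y y)"
    by (metis Re_complex_of_real cinner_self)
  then show ?thesis
    using cinner_commute[of y x] by (simp add: cinner_self)
qed

lemma power2_norm_diff:
  "(norm (x - y))\<^sup>2 = (norm x)\<^sup>2 + (norm y)\<^sup>2 - 2 * Re (cinner x y)"
  using power2_norm_add[of x "- y"] by (simp add: cinner_minus_right)

lemma parallelogram_law:
  "(norm (x + y))\<^sup>2 + (norm (x - y))\<^sup>2 = 2 * (norm x)\<^sup>2 + 2 * (norm (y::'a::complex_inner))\<^sup>2"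
  using power2_norm_add[of x y] power2_norm_diff[of x y] by simp

lemma bounded_linear_scaleC: "bounded_linear (scaleC c :: 'a::complex_normed_vector \<Rightarrow> 'a)"
  by (rule bounded_linear_intro[where K = "cmod c"])
    (auto simp: scaleC_add_right scaleR_scaleC scaleC_scaleC mult.commute norm_scaleC)

lemma isometry_bounded_linear:
  fixes T :: "'a::complex_inner \<Rightarrow> 'a"
  assumes "isometry T"
  shows "bounded_linear T"
  by (rule bounded_linear_intro[where K = 1])
    (use assms in \<open>auto simp: scaleR_scaleC isometry_def clinear_op_def\<close>)

text \<open>Polarization: norms determine \<open>Re (cinner x y)\<close>, and
  \<open>Im (cinner x y) = Re (cinner (scaleC \<i> x) y)\<close>.\<close>
lemma isometry_cinner:
  fixes T :: "'a::complex_inner \<Rightarrow> 'a"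
  assumes "isometry T"
  shows "cinner (T x) (T y) = cinner x y"
proof -
  have add: "T (x + y) = T x + T y" and mult: "T (scaleC c x) = scaleC c (T x)"
    and norm: "norm (T x) = norm x" for x y c
    using assms by (auto simp: isometry_def clinear_op_def)
  have Re: "Re (cinner (T x) (T y)) = Re (cinner x y)" for x y
    using power2_norm_add[of x y] power2_norm_add[of "T x" "T y"] norm[of "x + y"]
    by (simp add: add norm)
  have "Im (cinner u v) = Re (cinner (scaleC \<i> u) v)" for u v :: 'a
    by (simp add: cinner_scaleC_left)
  then have "Im (cinner (T x) (T y)) = Im (cinner x y)"
    using Re[of "scaleC \<i> x" y] by (simp add: mult)
  with Re show ?thesis
    by (simp add: complex_eq_iff)
qed

lemma S_word_Nil [simp]: "S_word S [] = id"
  and S_word_Cons [simp]: "S_word S (i # w) = S i \<circ> S_word S w"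
  by (simp_all add: S_word_def)

section \<open>Orthonormal expansions\<close>

lemma summable_on_if_small_tails:
  fixes g :: "'a \<Rightarrow> 'b::{real_normed_vector, complete_space}"
  assumes tails: "\<And>e. e > 0 \<Longrightarrow>
      \<exists>F0. finite F0 \<and> F0 \<subseteq> A \<and> (\<forall>F. finite F \<and> F \<subseteq> A - F0 \<longrightarrow> norm (sum g F) < e)"
  shows "g summable_on A"
proof -
  have "\<exists>P. eventually P (finite_subsets_at_top A) \<and>
      (\<forall>F F'. P F \<and> P F' \<longrightarrow> dist (sum g F) (sum g F') < e)" if "e > 0" for e
  proof -
    obtain F0 where F0: "finite F0" "F0 \<subseteq> A"
      and small: "\<And>F. finite F \<Longrightarrow> F \<subseteq> A - F0 \<Longrightarrow> norm (sum g F) < e / 2"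
      using tails[of "e / 2"] \<open>e > 0\<close> by auto
    define P where "P F \<longleftrightarrow> finite F \<and> F0 \<subseteq> F \<and> F \<subseteq> A" for F
    have "eventually P (finite_subsets_at_top A)"
      unfolding eventually_finite_subsets_at_top P_def using F0 by blast
    moreover have "dist (sum g F) (sum g F') < e" if "P F" "P F'" for F F'
    proof -
      have "sum g F = sum g (F - F0) + sum g F0" "sum g F' = sum g (F' - F0) + sum g F0"
        using that by (auto simp: P_def sum.subset_diff)
      then have "dist (sum g F) (sum g F') = norm (sum g (F - F0) - sum g (F' - F0))"
        by (simp add: dist_norm)
      also have "\<dots> \<le> norm (sum g (F - F0)) + norm (sum g (F' - F0))"
        by (rule norm_triangle_ineq4)
      also have "\<dots> < e / 2 + e / 2"
        using that by (intro add_strict_mono small) (auto simp: P_def)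
      finally show ?thesis
        by simp
    qed
    ultimately show ?thesis
      by blast
  qed
  then have "cauchy_filter (filtermap (sum g) (finite_subsets_at_top A))"
    by (simp add: cauchy_filter_metric_filtermap)
  moreover have "complete (UNIV :: 'b set)"
    by (meson Cauchy_convergent UNIV_I complete_def convergent_def)
  ultimately obtain L where "(sum g \<longlongrightarrow> L) (finite_subsets_at_top A)"
    using complete_uniform[where S = UNIV] by (force simp: filterlim_def)
  then show ?thesis
    unfolding summable_on_def has_sum_def by blast
qed

definition orthonormal_on :: "'b set \<Rightarrow> ('b \<Rightarrow> 'a::complex_inner) \<Rightarrow> bool" where
  "orthonormal_on A e \<longleftrightarrow> (\<forall>v\<in>A. \<forall>w\<in>A. cinner (e v) (e w) = (if v = w then 1 else 0))"

lemma power2_norm_sum_orthonormal: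
  assumes "orthonormal_on A e" "finite F" "F \<subseteq> A"
  shows "(norm (\<Sum>w\<in>F. scaleC (f w) (e w)))\<^sup>2 = (\<Sum>w\<in>F. (cmod (f w))\<^sup>2)"
  using assms(2,3)
proof (induction F rule: finite_induct)
  case (insert v F)
  have "cinner (scaleC (f v) (e v)) (\<Sum>w\<in>F. scaleC (f w) (e w)) = 0"
    using assms(1) insert by (auto simp: orthonormal_on_def cinner_sum_right cinner_scaleC_left
        cinner_scaleC_right intro!: sum.neutral)
  moreover have "cinner (e v) (e v) = 1"
    using assms(1) insert by (simp add: orthonormal_on_def)
  then have "(norm (e v))\<^sup>2 = 1"
    by (metis cinner_self of_real_eq_1_iff)
  then have "norm (e v) = 1"
    using norm_ge_zero[of "e v"] by (auto simp: power2_eq_1_iff)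
  ultimately show ?case
    using insert power2_norm_add[of "scaleC (f v) (e v)"] by (simp add: norm_scaleC)
qed simp

lemma orthonormal_expansion_summable:
  fixes e :: "'b \<Rightarrow> 'a::{complex_inner, complete_space}"
  assumes orth: "orthonormal_on A e" and sq: "(\<lambda>w. (cmod (f w))\<^sup>2) summable_on A"
  shows "(\<lambda>w. scaleC (f w) (e w)) summable_on A"
proof (rule summable_on_if_small_tails)
  fix \<epsilon> :: real
  assume "\<epsilon> > 0"
  let ?r = "\<lambda>w. (cmod (f w))\<^sup>2"
  obtain F0 where F0: "finite F0" "F0 \<subseteq> A" and close: "dist (sum ?r F0) (infsum ?r A) \<le> \<epsilon>\<^sup>2 / 2"
    using infsum_finite_approximation[OF sq, of "\<epsilon>\<^sup>2 / 2"] \<open>\<epsilon> > 0\<close> by auto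
  have "norm (\<Sum>w\<in>F. scaleC (f w) (e w)) < \<epsilon>" if F: "finite F" "F \<subseteq> A - F0" for F
  proof -
    have "sum ?r F + sum ?r F0 = sum ?r (F \<union> F0)"
      using F F0 by (subst sum.union_disjoint) auto
    also have "\<dots> \<le> infsum ?r A"
      using F F0 by (intro finite_sum_le_infsum sq) auto
    finally have "sum ?r F \<le> \<epsilon>\<^sup>2 / 2"
      using close unfolding dist_real_def by arith
    also have "\<dots> < \<epsilon>\<^sup>2"
      using \<open>\<epsilon> > 0\<close> by simp
    finally have "(norm (\<Sum>w\<in>F. scaleC (f w) (e w)))\<^sup>2 < \<epsilon>\<^sup>2"
      using power2_norm_sum_orthonormal[OF orth \<open>finite F\<close>, of f] F by (metis Diff_subset subset_trans)
    then show ?thesis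
      by (rule power_less_imp_less_base) (use \<open>\<epsilon> > 0\<close> in simp)
  qed
  with F0 show "\<exists>F0. finite F0 \<and> F0 \<subseteq> A \<and>
      (\<forall>F. finite F \<and> F \<subseteq> A - F0 \<longrightarrow> norm (\<Sum>w\<in>F. scaleC (f w) (e w)) < \<epsilon>)"
    by blast
qed

lemma power2_norm_orthonormal_expansion:
  assumes "orthonormal_on A e" and "((\<lambda>w. scaleC (f w) (e w)) has_sum x) A"
  shows "(norm x)\<^sup>2 = (\<Sum>\<^sub>\<infinity>w\<in>A. (cmod (f w))\<^sup>2)"
proof -
  have "((\<lambda>F. (norm (\<Sum>w\<in>F. scaleC (f w) (e w)))\<^sup>2) \<longlongrightarrow> (norm x)\<^sup>2) (finite_subsets_at_top A)"
    using assms(2) unfolding has_sum_def by (intro tendsto_intros)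
  moreover have "eventually (\<lambda>F. (norm (\<Sum>w\<in>F. scaleC (f w) (e w)))\<^sup>2 = (\<Sum>w\<in>F. (cmod (f w))\<^sup>2))
      (finite_subsets_at_top A)"
    by (intro eventually_finite_subsets_at_top_weakI power2_norm_sum_orthonormal[OF assms(1)])
  ultimately have "((\<lambda>w. (cmod (f w))\<^sup>2) has_sum (norm x)\<^sup>2) A"
    unfolding has_sum_def using tendsto_cong by fastforce
  then show ?thesis
    by (simp add: infsumI)
qed

section \<open>Orthogonal projection onto closed subspaces\<close>

definition csubspace :: "'a::complex_vector set \<Rightarrow> bool" where
  "csubspace C \<longleftrightarrow> 0 \<in> C \<and> (\<forall>x\<in>C. \<forall>y\<in>C. x + y \<in> C) \<and> (\<forall>c. \<forall>x\<in>C. scaleC c x \<in> C)"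

lemma csubspace_diff:
  assumes "csubspace C" "x \<in> C" "y \<in> C"
  shows "x - y \<in> C"
proof -
  have "x + scaleC (- 1) y \<in> C"
    using assms by (simp add: csubspace_def)
  then show ?thesis
    by (simp add: scaleC_minus1_left)
qed

lemma csubspace_closure:
  fixes C :: "'a::complex_normed_vector set"
  assumes "csubspace C"
  shows "csubspace (closure C)"
proof -
  have "scaleC c ` C \<subseteq> closure C" for c
    using assms closure_subset[of C] by (auto simp: csubspace_def)
  then have mult: "scaleC c ` closure C \<subseteq> closure C" for c
    by (intro image_closure_subset linear_continuous_on bounded_linear_scaleC) auto
  have "(+) x ` C \<subseteq> closure C" if "x \<in> C" for x
    using assms that closure_subset[of C] by (auto simp: csubspace_def)
  then have "(+) x ` closure C \<subseteq> closure C" if "x \<in> C" for x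
    using that by (intro image_closure_subset continuous_intros) auto
  then have "(\<lambda>x. x + y) ` C \<subseteq> closure C" if "y \<in> closure C" for y
    using that by blast
  then have add: "(\<lambda>x. x + y) ` closure C \<subseteq> closure C" if "y \<in> closure C" for y
    using that by (intro image_closure_subset continuous_intros) auto
  show ?thesis
    using assms closure_subset mult add unfolding csubspace_def image_subset_iff by blast
qed

lemma Cauchy_if_power2_dist_le:
  fixes ys :: "nat \<Rightarrow> 'a::metric_space"
  assumes dist: "\<And>k m. (dist (ys k) (ys m))\<^sup>2 \<le> r k + r m" and "r \<longlonglongrightarrow> 0"
  shows "Cauchy ys"
proof (rule metric_CauchyI)
  fix e :: real
  assume "e > 0"
  then have "0 < e\<^sup>2 / 2"
    by simp
  then have "eventually (\<lambda>k. r k < e\<^sup>2 / 2) sequentially"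
    using \<open>r \<longlonglongrightarrow> 0\<close> order_tendstoD(2) by blast
  then obtain M where M: "\<And>k. k \<ge> M \<Longrightarrow> r k < e\<^sup>2 / 2"
    unfolding eventually_sequentially by blast
  have "dist (ys k) (ys m) < e" if "k \<ge> M" "m \<ge> M" for k m
  proof -
    have "(dist (ys k) (ys m))\<^sup>2 < e\<^sup>2"
      using dist[of k m] M[OF that(1)] M[OF that(2)] by linarith
    then show ?thesis
      by (rule power_less_imp_less_base) (use \<open>e > 0\<close> in simp)
  qed
  then show "\<exists>M. \<forall>k\<ge>M. \<forall>m\<ge>M. dist (ys k) (ys m) < e"
    by blast
qed

lemma power2_dist_le_near_minimum:
  fixes C :: "'a::complex_inner set"
  assumes "csubspace C" and D: "\<And>y. y \<in> C \<Longrightarrow> D \<le> (norm (x - y))\<^sup>2" and "u \<in> C" "v \<in> C"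
  shows "(dist u v)\<^sup>2 \<le> 2 * ((norm (x - u))\<^sup>2 - D) + 2 * ((norm (x - v))\<^sup>2 - D)"
proof -
  have "scaleC (of_real (1 / 2)) (u + v) \<in> C"
    using assms by (simp add: csubspace_def)
  then have "D \<le> (norm (x - scaleR (1 / 2) (u + v)))\<^sup>2"
    by (simp add: D scaleR_scaleC)
  moreover have "(x - u) + (x - v) = 2 *\<^sub>R (x - scaleR (1 / 2) (u + v))"
    by (simp add: algebra_simps scaleR_2)
  ultimately have "4 * D + (norm (v - u))\<^sup>2 \<le> 2 * (norm (x - u))\<^sup>2 + 2 * (norm (x - v))\<^sup>2"
    using parallelogram_law[of "x - u" "x - v"] by (simp add: power_mult_distrib)
  then show ?thesis
    by (simp add: dist_norm norm_minus_commute)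
qed

lemma closest_point_exists:
  fixes C :: "'a::{complex_inner, complete_space} set"
  assumes "closed C" "csubspace C"
  shows "\<exists>p\<in>C. \<forall>y\<in>C. norm (x - p) \<le> norm (x - y)"
proof -
  let ?d = "\<lambda>y. (norm (x - y))\<^sup>2"
  define D where "D = Inf (?d ` C)"
  have "C \<noteq> {}"
    using assms(2) by (auto simp: csubspace_def)
  have bdd: "bdd_below (?d ` C)"
    by (rule bdd_belowI[of _ 0]) auto
  have D_le: "D \<le> ?d y" if "y \<in> C" for y
    unfolding D_def using bdd that by (auto intro: cInf_lower)
  have "\<exists>y\<in>C. ?d y < D + inverse (real (Suc k))" for k
  proof -
    have "Inf (?d ` C) < D + inverse (real (Suc k))"
      by (simp add: D_def)
    then show ?thesis
      using cInf_less_iff[OF _ bdd] \<open>C \<noteq> {}\<close> by auto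
  qed
  then obtain ys where ys: "\<And>k. ys k \<in> C" and close: "\<And>k. ?d (ys k) < D + inverse (real (Suc k))"
    by metis
  have "(dist (ys k) (ys m))\<^sup>2 \<le> 2 * inverse (real (Suc k)) + 2 * inverse (real (Suc m))" for k m
  proof -
    have "(dist (ys k) (ys m))\<^sup>2 \<le> 2 * (?d (ys k) - D) + 2 * (?d (ys m) - D)"
      using assms(2) D_le ys[of k] ys[of m] by (rule power2_dist_le_near_minimum)
    then show ?thesis
      using close[of k] close[of m] by argo
  qed
  moreover have "(\<lambda>k. 2 * inverse (real (Suc k))) \<longlonglongrightarrow> 0"
    using tendsto_mult_right_zero[OF LIMSEQ_inverse_real_of_nat] .
  ultimately have "Cauchy ys"
    by (rule Cauchy_if_power2_dist_le)
  then obtain p where p: "ys \<longlonglongrightarrow> p"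
    using Cauchy_convergent convergent_def by blast
  have "p \<in> C"
    using closed_sequentially[OF assms(1) ys p] .
  have "?d p \<le> D"
  proof (rule LIMSEQ_le)
    show "(\<lambda>k. ?d (ys k)) \<longlonglongrightarrow> ?d p"
      using p by (intro tendsto_intros)
    show "(\<lambda>k. D + inverse (real (Suc k))) \<longlonglongrightarrow> D"
      using tendsto_add[OF tendsto_const LIMSEQ_inverse_real_of_nat, of D] by simp
    show "\<exists>N. \<forall>k\<ge>N. ?d (ys k) \<le> D + inverse (real (Suc k))"
      using close by (intro exI[of _ 0]) (simp add: less_imp_le)
  qed
  have "norm (x - p) \<le> norm (x - y)" if "y \<in> C" for y
  proof (rule power2_le_imp_le)
    show "?d p \<le> ?d y"
      using \<open>?d p \<le> D\<close> D_le[OF that] by linarith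
  qed simp
  with \<open>p \<in> C\<close> show ?thesis
    by blast
qed

text \<open>First-order condition at the closest point \<open>p\<close>: moving \<open>p\<close> by \<open>t z\<close> with
  \<open>t = cnj a / \<parallel>z\<parallel>\<^sup>2\<close> would decrease the distance by \<open>\<bar>a\<bar>\<^sup>2 / \<parallel>z\<parallel>\<^sup>2\<close>.\<close>
lemma closest_point_orthogonal:
  fixes C :: "'a::complex_inner set"
  assumes "csubspace C" "p \<in> C" and closest: "\<And>y. y \<in> C \<Longrightarrow> norm (x - p) \<le> norm (x - y)"
    and "z \<in> C"
  shows "cinner (x - p) z = 0"
proof (cases "z = 0")
  case False
  define a where "a = cinner (x - p) z"
  define t where "t = cnj a / of_real ((norm z)\<^sup>2)"
  have "p + scaleC t z \<in> C"
    using assms by (simp add: csubspace_def)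
  then have "(norm (x - p))\<^sup>2 \<le> (norm ((x - p) - scaleC t z))\<^sup>2"
    using closest[of "p + scaleC t z"] by (simp add: diff_diff_eq power_mono)
  also have "\<dots> = (norm (x - p))\<^sup>2 - (cmod a)\<^sup>2 / (norm z)\<^sup>2"
  proof -
    have "cmod t = cmod a / (norm z)\<^sup>2"
      by (simp add: t_def norm_divide norm_power)
    then have "(cmod t)\<^sup>2 * (norm z)\<^sup>2 = (cmod a)\<^sup>2 / (norm z)\<^sup>2"
      using False by (simp add: power_divide power2_eq_square)
    moreover have "cinner (x - p) (scaleC t z) = cnj a * a / of_real ((norm z)\<^sup>2)"
      by (simp add: cinner_scaleC_right t_def a_def)
    then have "cinner (x - p) (scaleC t z) = of_real ((cmod a)\<^sup>2 / (norm z)\<^sup>2)"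
      by (metis complex_norm_square mult.commute of_real_divide)
    then have "Re (cinner (x - p) (scaleC t z)) = (cmod a)\<^sup>2 / (norm z)\<^sup>2"
      by simp
    ultimately show ?thesis
      by (simp add: power2_norm_diff norm_scaleC power_mult_distrib)
  qed
  finally have "(cmod a)\<^sup>2 / (norm z)\<^sup>2 \<le> 0"
    by simp
  then show ?thesis
    using False by (simp add: a_def divide_le_0_iff)
qed simp

lemma orthogonal_projection_exists:
  fixes C :: "'a::{complex_inner, complete_space} set"
  assumes "closed C" "csubspace C"
  obtains p where "p \<in> C" "\<And>z. z \<in> C \<Longrightarrow> cinner (x - p) z = 0"
  using closest_point_exists[OF assms] closest_point_orthogonal[OF assms(2)] by metis

section \<open>The Fock space\<close>

lemma fock_add:
  assumes "f \<in> fock n" "g \<in> fock n"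
  shows "(\<lambda>w. f w + g w) \<in> fock n"
proof -
  have bound: "(cmod (a + b))\<^sup>2 \<le> 2 * (cmod a)\<^sup>2 + 2 * (cmod b)\<^sup>2" for a b :: complex
  proof -
    have "(cmod (a + b))\<^sup>2 \<le> (cmod a + cmod b)\<^sup>2"
      by (simp add: norm_triangle_ineq power_mono)
    also have "\<dots> \<le> 2 * (cmod a)\<^sup>2 + 2 * (cmod b)\<^sup>2"
      using sum_squares_bound[of "cmod a" "cmod b"] by (simp add: power2_sum)
    finally show ?thesis .
  qed
  have "(\<lambda>w. 2 * (cmod (f w))\<^sup>2 + 2 * (cmod (g w))\<^sup>2) summable_on UNIV"
    using assms unfolding fock_def by (intro summable_on_add summable_on_cmult_right) auto
  then have "(\<lambda>w. (cmod (f w + g w))\<^sup>2) summable_on UNIV"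
    by (rule summable_on_comparison_test) (simp_all add: bound)
  then show ?thesis
    using assms by (simp add: fock_def)
qed

lemma fock_mult:
  assumes "f \<in> fock n"
  shows "(\<lambda>w. a * f w) \<in> fock n"
  using assms by (auto simp: fock_def norm_mult power_mult_distrib intro!: summable_on_cmult_right)

lemma fock_zero: "(\<lambda>w. 0) \<in> fock n"
  by (simp add: fock_def)

lemma fock_vacuum: "(\<lambda>w. if w = [] then 1 else 0) \<in> fock n"
proof -
  have "(\<lambda>w::nat list. (cmod (if w = [] then 1 else 0 :: complex))\<^sup>2) summable_on {[]}"
    by simp
  then have "(\<lambda>w::nat list. (cmod (if w = [] then 1 else 0 :: complex))\<^sup>2) summable_on UNIV"
    by (rule summable_on_cong_neutral[THEN iffD1, rotated -1]) auto
  then show ?thesis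
    by (simp add: fock_def words_def)
qed

lemma fock_Lcre:
  assumes "i < n" "f \<in> fock n"
  shows "Lcre i f \<in> fock n"
proof -
  let ?r = "\<lambda>w. (cmod (Lcre i f w))\<^sup>2"
  have "(\<lambda>w. (cmod (f w))\<^sup>2) summable_on UNIV"
    using assms by (simp add: fock_def)
  then have "?r summable_on range (Cons i)"
    by (subst summable_on_reindex) (simp_all add: o_def Lcre_def)
  then have "?r summable_on UNIV"
    by (rule summable_on_cong_neutral[THEN iffD1, rotated -1])
      (auto simp: Lcre_def split: list.splits)
  moreover have "Lcre i f w = 0" if "w \<notin> words n" for w
    using that assms by (cases w) (auto simp: Lcre_def words_def fock_def)
  ultimately show ?thesis
    by (simp add: fock_def)
qed

lemma norm_le_fock_norm:
  assumes "f \<in> fock n"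
  shows "cmod (f w) \<le> fock_norm f"
proof -
  have "(\<Sum>v\<in>{w}. (cmod (f v))\<^sup>2) \<le> (\<Sum>\<^sub>\<infinity>v. (cmod (f v))\<^sup>2)"
    using assms by (intro finite_sum_le_infsum) (auto simp: fock_def)
  then show ?thesis
    unfolding fock_norm_def by (simp add: real_le_rsqrt)
qed

section \<open>From a wandering vector to a bounded below intertwiner\<close>

definition wandering_expansion ::
    "nat \<Rightarrow> (nat \<Rightarrow> 'a \<Rightarrow> 'a) \<Rightarrow> 'a \<Rightarrow> (nat list \<Rightarrow> complex) \<Rightarrow> 'a::complex_normed_vector" where
  "wandering_expansion n S \<eta> f = (\<Sum>\<^sub>\<infinity>w\<in>words n. scaleC (f w) (S_word S w \<eta>))"

lemma orthonormal_on_wandering: "wandering n S \<eta> \<Longrightarrow> orthonormal_on (words n) (\<lambda>w. S_word S w \<eta>)"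
  by (simp add: wandering_def orthonormal_on_def)

lemma has_sum_wandering_expansion:
  fixes S :: "nat \<Rightarrow> 'a::chilbert_space \<Rightarrow> 'a"
  assumes "wandering n S \<eta>" "f \<in> fock n"
  shows "((\<lambda>w. scaleC (f w) (S_word S w \<eta>)) has_sum wandering_expansion n S \<eta> f) (words n)"
proof -
  have "(\<lambda>w. (cmod (f w))\<^sup>2) summable_on words n"
    using assms(2) summable_on_subset_banach by (auto simp: fock_def)
  then show ?thesis
    unfolding wandering_expansion_def
    by (intro has_sum_infsum orthonormal_expansion_summable orthonormal_on_wandering assms(1))
qed

lemma norm_wandering_expansion:
  fixes S :: "nat \<Rightarrow> 'a::chilbert_space \<Rightarrow> 'a"
  assumes "wandering n S \<eta>" "f \<in> fock n"
  shows "norm (wandering_expansion n S \<eta> f) = fock_norm f"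
proof -
  have "(norm (wandering_expansion n S \<eta> f))\<^sup>2 = (\<Sum>\<^sub>\<infinity>w\<in>words n. (cmod (f w))\<^sup>2)"
    using power2_norm_orthonormal_expansion[OF orthonormal_on_wandering has_sum_wandering_expansion]
      assms by blast
  also have "\<dots> = (\<Sum>\<^sub>\<infinity>w. (cmod (f w))\<^sup>2)"
    using assms(2) by (intro infsum_cong_neutral) (auto simp: fock_def)
  finally show ?thesis
    unfolding fock_norm_def by (simp add: real_sqrt_unique)
qed

lemma wandering_expansion_Lcre:
  fixes S :: "nat \<Rightarrow> 'a::chilbert_space \<Rightarrow> 'a"
  assumes "isometry (S i)" "i < n" "wandering n S \<eta>" "f \<in> fock n"
  shows "S i (wandering_expansion n S \<eta> f) = wandering_expansion n S \<eta> (Lcre i f)"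
proof -
  let ?g = "\<lambda>w. scaleC (Lcre i f w) (S_word S w \<eta>)"
  have S_mult: "S i (scaleC a x) = scaleC a (S i x)" for a x
    using assms(1) by (simp add: isometry_def clinear_op_def)
  have "((\<lambda>w. S i (scaleC (f w) (S_word S w \<eta>))) has_sum S i (wandering_expansion n S \<eta> f)) (words n)"
    using has_sum_bounded_linear[OF isometry_bounded_linear[OF assms(1)]
        has_sum_wandering_expansion[OF assms(3,4)]] .
  then have "(?g \<circ> Cons i has_sum S i (wandering_expansion n S \<eta> f)) (words n)"
    by (simp add: o_def S_mult Lcre_def)
  then have "(?g has_sum S i (wandering_expansion n S \<eta> f)) (Cons i ` words n)"
    by (subst has_sum_reindex) auto
  then have "(?g has_sum S i (wandering_expansion n S \<eta> f)) (words n)"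
    by (rule has_sum_cong_neutral[THEN iffD1, rotated -1])
      (use assms(2) in \<open>auto simp: Lcre_def words_def split: list.splits\<close>)
  then show ?thesis
    by (simp add: wandering_expansion_def infsumI)
qed

lemma wandering_expansion_intertwiner:
  fixes S :: "nat \<Rightarrow> 'a::chilbert_space \<Rightarrow> 'a"
  assumes rep: "En_rep n S" and wd: "wandering n S \<eta>"
  shows "wandering_expansion n S \<eta> \<in> intertwiners n S"
proof -
  let ?X = "wandering_expansion n S \<eta>"
  have add: "?X (\<lambda>w. f w + g w) = ?X f + ?X g" if "f \<in> fock n" "g \<in> fock n" for f g
  proof -
    have "((\<lambda>w. scaleC (f w + g w) (S_word S w \<eta>)) has_sum ?X f + ?X g) (words n)"
      using has_sum_add[OF has_sum_wandering_expansion[OF wd that(1)]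
          has_sum_wandering_expansion[OF wd that(2)]]
      by (simp add: scaleC_add_left)
    then show ?thesis
      by (simp add: wandering_expansion_def infsumI)
  qed
  have mult: "?X (\<lambda>w. c * f w) = scaleC c (?X f)" if "f \<in> fock n" for c f
  proof -
    have "((\<lambda>w. scaleC (c * f w) (S_word S w \<eta>)) has_sum scaleC c (?X f)) (words n)"
      using has_sum_bounded_linear[OF bounded_linear_scaleC has_sum_wandering_expansion[OF wd that]]
      by (simp add: scaleC_scaleC)
    then show ?thesis
      by (simp add: wandering_expansion_def infsumI)
  qed
  have bounded: "\<exists>K. \<forall>f\<in>fock n. norm (?X f) \<le> K * fock_norm f"
    using norm_wandering_expansion[OF wd] by (intro exI[of _ 1]) simp
  have Lcre: "S i (?X f) = ?X (Lcre i f)" if "i < n" "f \<in> fock n" for i f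
    using rep that wd by (intro wandering_expansion_Lcre) (auto simp: En_rep_def)
  show ?thesis
    unfolding intertwiners_def bounded_fock_map_def using add mult bounded Lcre by blast
qed

lemma bounded_below_wandering_expansion:
  fixes S :: "nat \<Rightarrow> 'a::chilbert_space \<Rightarrow> 'a"
  assumes "wandering n S \<eta>"
  shows "bounded_below_fock n (wandering_expansion n S \<eta>)"
  unfolding bounded_below_fock_def using norm_wandering_expansion[OF assms]
  by (intro exI[of _ 1]) simp

section \<open>From a bounded below intertwiner to a wandering vector\<close>

lemma S_word_mem_invariant:
  assumes "\<And>i. i < n \<Longrightarrow> S i ` C \<subseteq> C" "\<And>i. i < n \<Longrightarrow> S i \<eta> \<in> C"
    and "w \<in> words n" "w \<noteq> []"
  shows "S_word S w \<eta> \<in> C"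
  using assms(3,4)
proof (induction w)
  case (Cons i w)
  then have "i < n" "w \<in> words n"
    by (auto simp: words_def)
  then show ?case
    using Cons.IH assms(1,2) by (cases "w = []") auto
qed simp

text \<open>A common first letter of \<open>v\<close> and \<open>w\<close> cancels because \<open>S\<^sub>i\<close> is isometric, different
  first letters give orthogonal ranges, and an empty word is covered by the hypothesis.\<close>
lemma wandering_if_orthogonal_to_shifts:
  fixes S :: "nat \<Rightarrow> 'a::complex_inner \<Rightarrow> 'a"
  assumes rep: "En_rep n S" and "norm \<eta> = 1"
    and orth: "\<And>w. w \<in> words n \<Longrightarrow> w \<noteq> [] \<Longrightarrow> cinner \<eta> (S_word S w \<eta>) = 0"
  shows "wandering n S \<eta>"
  unfolding wandering_def
proof (intro ballI)
  fix v w
  assume "v \<in> words n" "w \<in> words n"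
  then show "cinner (S_word S v \<eta>) (S_word S w \<eta>) = (if v = w then 1 else 0)"
  proof (induction v arbitrary: w)
    case Nil
    show ?case
      using orth[OF Nil(2)] \<open>norm \<eta> = 1\<close> by (cases w) (auto simp: cinner_self)
  next
    case (Cons i v)
    note IH = Cons.IH
    have "i < n" "v \<in> words n"
      using Cons.prems(1) by (auto simp: words_def)
    show ?case
    proof (cases w)
      case Nil
      then show ?thesis
        using orth[OF Cons.prems(1)] cinner_commute[of "S_word S (i # v) \<eta>" \<eta>] by simp
    next
      case w: (Cons j w')
      then have "j < n" "w' \<in> words n"
        using \<open>w \<in> words n\<close> by (auto simp: words_def)
      show ?thesis
      proof (cases "i = j")
        case True
        then show ?thesis
          using w IH[OF \<open>v \<in> words n\<close> \<open>w' \<in> words n\<close>] rep \<open>i < n\<close>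
          by (simp add: En_rep_def isometry_cinner)
      next
        case False
        then show ?thesis
          using w rep \<open>i < n\<close> \<open>j < n\<close> by (simp add: En_rep_def)
      qed
    qed
  qed
qed

lemma csubspace_image_bounded_fock_map:
  assumes "bounded_fock_map n X"
  shows "csubspace (X ` {h \<in> fock n. h [] = 0})"
proof -
  have add: "X (\<lambda>w. f w + g w) = X f + X g" if "f \<in> fock n" "g \<in> fock n" for f g
    using assms that by (simp add: bounded_fock_map_def)
  have mult: "X (\<lambda>w. c * f w) = scaleC c (X f)" if "f \<in> fock n" for f c
    using assms that by (simp add: bounded_fock_map_def)
  have "X (\<lambda>w. 0) = 0"
    using mult[OF fock_zero, of 0] by simp
  then have "0 \<in> X ` {h \<in> fock n. h [] = 0}"
    using fock_zero by (metis (mono_tags, lifting) image_eqI mem_Collect_eq)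
  moreover have "X f + X g \<in> X ` {h \<in> fock n. h [] = 0}"
    if "f \<in> fock n" "f [] = 0" "g \<in> fock n" "g [] = 0" for f g
    using that add[of f g] fock_add[of f n g] by (intro rev_image_eqI[of "\<lambda>w. f w + g w"]) auto
  moreover have "scaleC c (X f) \<in> X ` {h \<in> fock n. h [] = 0}"
    if "f \<in> fock n" "f [] = 0" for f c
    using that mult[of f c] fock_mult[of f n c]
    by (intro rev_image_eqI[of "\<lambda>w. c * f w"]) auto
  ultimately show ?thesis
    unfolding csubspace_def by blast
qed

text \<open>\<open>\<xi>\<^sub>\<emptyset> - h\<close> has coefficient \<open>1\<close> at the empty word, hence Fock norm at least \<open>1\<close>.\<close>
lemma vacuum_image_far:
  assumes X: "bounded_fock_map n X" and below: "\<And>f. f \<in> fock n \<Longrightarrow> c * fock_norm f \<le> norm (X f)"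
    and "c \<ge> 0" and h: "h \<in> fock n" "h [] = 0"
  shows "c \<le> norm (X (\<lambda>w. if w = [] then 1 else 0) - X h)"
proof -
  define d where "d = (\<lambda>w. (if w = [] then 1 else 0) + (- 1) * h w)"
  have d: "d \<in> fock n"
    unfolding d_def by (intro fock_add fock_mult fock_vacuum h)
  have "(\<lambda>w. d w + h w) = (\<lambda>w. if w = [] then 1 else 0)"
    by (auto simp: d_def)
  moreover have "X (\<lambda>w. d w + h w) = X d + X h"
    using X d h by (simp add: bounded_fock_map_def)
  ultimately have "X (\<lambda>w. if w = [] then 1 else 0) - X h = X d"
    by simp
  moreover have "1 \<le> fock_norm d"
    using norm_le_fock_norm[OF d, of "[]"] h by (simp add: d_def)
  then have "c \<le> c * fock_norm d"
    using \<open>c \<ge> 0\<close> by (simp add: mult_le_cancel_left1)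
  ultimately show ?thesis
    using below[OF d] by simp
qed

lemma wandering_if_bounded_below_intertwiner:
  fixes S :: "nat \<Rightarrow> 'a::chilbert_space \<Rightarrow> 'a"
  assumes rep: "En_rep n S" and X: "X \<in> intertwiners n S" and "bounded_below_fock n X"
  shows "\<exists>\<eta>. wandering n S \<eta>"
proof -
  obtain c where "c > 0" and below: "\<And>f. f \<in> fock n \<Longrightarrow> c * fock_norm f \<le> norm (X f)"
    using \<open>bounded_below_fock n X\<close> unfolding bounded_below_fock_def by blast
  have X_bounded: "bounded_fock_map n X"
    and X_Lcre: "\<And>i f. i < n \<Longrightarrow> f \<in> fock n \<Longrightarrow> S i (X f) = X (Lcre i f)"
    using X by (auto simp: intertwiners_def)
  have S_linear: "bounded_linear (S i)" if "i < n" for i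
    using rep that by (simp add: En_rep_def isometry_bounded_linear)
  define \<xi> where "\<xi> = (\<lambda>w::nat list. if w = [] then 1 else (0::complex))"
  define N where "N = X ` {h \<in> fock n. h [] = 0}"
  have N: "csubspace N"
    unfolding N_def using X_bounded by (rule csubspace_image_bounded_fock_map)
  have "S i ` N \<subseteq> N" if "i < n" for i
    unfolding N_def using that by (auto simp: X_Lcre fock_Lcre Lcre_def)
  then have invariant: "S i ` closure N \<subseteq> closure N" if "i < n" for i
    using that closure_subset[of N]
    by (intro image_closure_subset linear_continuous_on S_linear) auto
  have vacuum_shift: "S i (X \<xi>) \<in> closure N" if "i < n" for i
    using that closure_subset[of N]
    by (auto simp: N_def X_Lcre fock_vacuum fock_Lcre \<xi>_def Lcre_def)
  have "N \<subseteq> {y. c \<le> norm (X \<xi> - y)}"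
    unfolding N_def \<xi>_def using vacuum_image_far[OF X_bounded below] \<open>c > 0\<close> by auto
  moreover have "closed {y. c \<le> norm (X \<xi> - y)}"
    by (intro closed_Collect_le continuous_intros)
  ultimately have far: "closure N \<subseteq> {y. c \<le> norm (X \<xi> - y)}"
    by (rule closure_minimal)
  obtain p where "p \<in> closure N" and p: "\<And>z. z \<in> closure N \<Longrightarrow> cinner (X \<xi> - p) z = 0"
    using orthogonal_projection_exists[OF closed_closure csubspace_closure[OF N]] by blast
  define \<eta> where "\<eta> = scaleC (of_real (1 / norm (X \<xi> - p))) (X \<xi> - p)"
  have "X \<xi> - p \<noteq> 0"
    using far \<open>p \<in> closure N\<close> \<open>c > 0\<close> by auto
  then have unit: "norm \<eta> = 1"
    by (simp add: \<eta>_def norm_scaleC norm_divide)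
  have shift: "S i \<eta> \<in> closure N" if "i < n" for i
  proof -
    have "S i p \<in> closure N"
      using invariant[OF that] \<open>p \<in> closure N\<close> by blast
    then have "S i (X \<xi>) - S i p \<in> closure N"
      using csubspace_diff[OF csubspace_closure[OF N] vacuum_shift[OF that]] by blast
    moreover have "S i (X \<xi> - p) = S i (X \<xi>) - S i p"
      using S_linear[OF that] by (simp add: linear_diff bounded_linear.linear)
    moreover have "S i \<eta> = scaleC (of_real (1 / norm (X \<xi> - p))) (S i (X \<xi> - p))"
      using rep that by (simp add: \<eta>_def En_rep_def isometry_def clinear_op_def)
    ultimately show ?thesis
      using csubspace_closure[OF N] by (simp add: csubspace_def)
  qed
  have orth: "cinner \<eta> z = 0" if "z \<in> closure N" for z
    using p[OF that] by (simp add: \<eta>_def cinner_scaleC_left)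
  have "cinner \<eta> (S_word S w \<eta>) = 0" if "w \<in> words n" "w \<noteq> []" for w
    by (rule orth[OF S_word_mem_invariant[OF invariant shift that]])
  then have "wandering n S \<eta>"
    by (rule wandering_if_orthogonal_to_shifts[OF rep unit])
  then show ?thesis
    by blast
qed

theorem corollary2p9:
  fixes n :: nat and S :: "nat \<Rightarrow> 'h::chilbert_space \<Rightarrow> 'h"
  assumes "n \<ge> 2" and "En_rep n S"
  shows "(\<exists>\<eta>. wandering n S \<eta>) \<longleftrightarrow> (\<exists>X\<in>intertwiners n S. bounded_below_fock n X)"
proof
  assume "\<exists>\<eta>. wandering n S \<eta>"
  then obtain \<eta> where "wandering n S \<eta>"
    by blast
  then show "\<exists>X\<in>intertwiners n S. bounded_below_fock n X"
    using wandering_expansion_intertwiner[OF assms(2)] bounded_below_wandering_expansion by blast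
next
  assume "\<exists>X\<in>intertwiners n S. bounded_below_fock n X"
  then show "\<exists>\<eta>. wandering n S \<eta>"
    using wandering_if_bounded_below_intertwiner[OF assms(2)] by blast
qed

end
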